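(* Let $d\ge1$, let $a_{-d},\dots,a_d\in\mathbb{C}$ with $a_{-k}=\overline{a_k}$ and $a_d\ne0$, let $b=(b(n))_{n\in\mathbb{Z}}$ be a bounded real sequence, and let $L$ be the operator on $\ell^2(\mathbb{Z})$ given by $(Lu)(n)=\sum_{k=-d}^da_ku(n+k)+b(n)u(n)$. If $u,v\in\ell^2(\mathbb{Z})$ satisfy $Lu=Eu$ and $Lv=Ev$ for the same eigenvalue $E$, then the vectors $U=\begin{pmatrix}\vec u(1)\\\vec u(0)\end{pmatrix}$ and $V=\begin{pmatrix}\vec v(1)\\\vec v(0)\end{pmatrix}$ in $\mathbb{C}^{2d}$ are symplectically orthogonal with respect to $S$, i.e. $U^*SV=0$.
   Context: For a sequence $u$, $\vec u(n)=(u(nd+d-1),\dots,u(nd+1),u(nd))^T\in\mathbb{C}^d$. $C$ is the $d\times d$ upper triangular matrix with first row $(a_d,a_{d-1},\dots,a_1)$, i.e. $C_{ij}=a_{d-j+i}$ for $j\ge i$ and $0$ for $j<i$, and $S=\begin{pmatrix}0&-C^*\\C&0\end{pmatrix}$. *)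

theory Defs
  imports "HOL-Analysis.Analysis" "Jordan_Normal_Form.Schur_Decomposition"
begin

(* \vec u(n) = (u(nd+d-1), ..., u(nd+1), u(nd))^T in C^d  (0-indexed component i is u(nd+d-1-i)) *)
definition blockvec :: "(int \<Rightarrow> complex) \<Rightarrow> nat \<Rightarrow> int \<Rightarrow> complex vec" where
  "blockvec u d n = vec d (\<lambda>i. u (n * int d + int d - 1 - int i))"

definition Cmat :: "(int \<Rightarrow> complex) \<Rightarrow> nat \<Rightarrow> complex mat" where
  "Cmat a d = mat d d (\<lambda>(i, j). if i \<le> j then a (int d - int j + int i) else 0)"

definition Smat :: "(int \<Rightarrow> complex) \<Rightarrow> nat \<Rightarrow> complex mat" where
  "Smat a d = four_block_mat (0\<^sub>m d d) (- mat_adjoint (Cmat a d)) (Cmat a d) (0\<^sub>m d d)"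

definition Lop :: "(int \<Rightarrow> complex) \<Rightarrow> (int \<Rightarrow> real) \<Rightarrow> nat \<Rightarrow> (int \<Rightarrow> complex) \<Rightarrow> int \<Rightarrow> complex" where
  "Lop a b d u n = (\<Sum>k = - int d..int d. a k * u (n + k)) + complex_of_real (b n) * u n"

definition ell2 :: "(int \<Rightarrow> complex) \<Rightarrow> bool" where
  "ell2 u \<longleftrightarrow> (\<lambda>n. (cmod (u n))\<^sup>2) summable_on UNIV"

end

theory Submission
  imports Defs
begin

(* U^* S V is the value at the cut m = d of a discrete Wronskian W(m), a sesquilinear sum over the
   bonds p -> p + k (1 <= k <= d) of L that cross the cut between m - 1 and m.  For solutions of
   Lu = Eu and Lv = Fv, self-adjointness of the coefficients gives Green's formula
   W(m + 1) - W(m) = (F - cnj E) cnj (u m) v m.  If E is real, W is therefore constant, and it tends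
   to 0 along the integers because u and v are square summable; so W = 0.  If E is not real, the
   same formula with v = u shows that (E - cnj E) times the sum of |u n|^2 over -N <= n < N tends
   to 0, so u = 0 and again W = 0. *)

lemma sum_int_symmetric_interval:
  fixes g :: "int \<Rightarrow> 'a::comm_monoid_add"
  shows "(\<Sum>k = - int d..int d. g k) = g 0 + (\<Sum>k = 1..int d. g k + g (- k))"
proof (induction d)
  case (Suc d)
  have "{- int (Suc d)..int (Suc d)} = insert (int d + 1) (insert (- (int d + 1)) {- int d..int d})"
    and "{1..int (Suc d)} = insert (int d + 1) {1..int d}"
    by auto
  with Suc show ?case
    by (simp add: sum.distrib ac_simps)
qed simp

lemma sum_int_interval_shift_diff:
  fixes f :: "int \<Rightarrow> 'a::ab_group_add"
  assumes "0 \<le> k"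
  shows "(\<Sum>p = m + 1 - k..<m + 1. f p) - (\<Sum>p = m - k..<m. f p) = f m - f (m - k)"
proof -
  have "(\<Sum>p = m - k..<m + 1. f p) = f m + (\<Sum>p = m - k..<m. f p)"
  proof -
    have "{m - k..<m + 1} = insert m {m - k..<m}"
      using assms by auto
    then show ?thesis
      by simp
  qed
  moreover have "(\<Sum>p = m - k..<m + 1. f p) = f (m - k) + (\<Sum>p = m + 1 - k..<m + 1. f p)"
  proof -
    have "{m - k..<m + 1} = insert (m - k) {m + 1 - k..<m + 1}"
      using assms by auto
    then show ?thesis
      by simp
  qed
  ultimately show ?thesis
    by (simp add: algebra_simps)
qed

lemma sum_lessThan_telescope_int:
  fixes f g :: "int \<Rightarrow> 'a::ab_group_add"
  assumes "\<And>m. f (m + 1) - f m = g m"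
  shows "f (M + int n) - f M = (\<Sum>i<n. g (M + int i))"
proof -
  have "g (M + int i) = f (M + int (Suc i)) - f (M + int i)" for i
    using assms[of "M + int i"] by (simp add: ac_simps)
  then have "(\<Sum>i<n. g (M + int i)) = f (M + int n) - f (M + int 0)"
    by (simp only: sum_lessThan_telescope[of "\<lambda>i. f (M + int i)"])
  then show ?thesis
    by simp
qed

lemma conjugate_append_vec:
  fixes v w :: "'a :: conjugatable_ring vec"
  shows "conjugate (v @\<^sub>v w) = conjugate v @\<^sub>v conjugate w"
  unfolding append_vec_def Let_def by (rule eq_vecI) auto

lemma scalar_prod_mat_adjoint:
  fixes A :: "complex mat"
  assumes "A \<in> carrier_mat n m" "x \<in> carrier_vec m" "y \<in> carrier_vec n"
  shows "conjugate x \<bullet> (mat_adjoint A *\<^sub>v y) = cnj (conjugate y \<bullet> (A *\<^sub>v x))"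
  using assms
  by (simp add: scalar_prod_def mult_mat_vec_def mat_adjoint_def mat_of_rows_def cols_def
      sum_distrib_left cnj_sum ac_simps sum.swap[of _ "{0..<m}"])

lemma Lop_split:
  "Lop a b d y m = (a 0 + of_real (b m)) * y m + (\<Sum>k = 1..int d. a k * y (m + k) + a (- k) * y (m - k))"
  unfolding Lop_def sum_int_symmetric_interval by (simp add: algebra_simps)

lemma ell2_tendsto_zero:
  assumes "ell2 x" and "inj h"
  shows "(\<lambda>N. x (h N)) \<longlonglongrightarrow> 0"
proof -
  have "(\<lambda>n. (cmod (x n))\<^sup>2) summable_on range h"
    using assms(1) unfolding ell2_def by (rule summable_on_subset_banach) simp
  then have "(\<lambda>N. (cmod (x (h N)))\<^sup>2) summable_on UNIV"
    using assms(2) by (simp add: summable_on_reindex o_def)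
  then have "summable (\<lambda>N. (cmod (x (h N)))\<^sup>2)"
    by (rule summable_on_imp_summable)
  then have "(\<lambda>N. sqrt ((cmod (x (h N)))\<^sup>2)) \<longlonglongrightarrow> sqrt 0"
    by (intro tendsto_real_sqrt summable_LIMSEQ_zero)
  then show ?thesis
    by (simp add: tendsto_norm_zero_iff)
qed

(* The bonds p -> p + k of L that cross the cut between m - 1 and m, i.e. p < m <= p + k. *)
definition crossing_sum ::
    "(int \<Rightarrow> complex) \<Rightarrow> nat \<Rightarrow> (int \<Rightarrow> complex) \<Rightarrow> (int \<Rightarrow> complex) \<Rightarrow> int \<Rightarrow> complex" where
  "crossing_sum a d x y m = (\<Sum>k = 1..int d. \<Sum>p = m - k..<m. cnj (x p) * a k * y (p + k))"

definition wronskian ::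
    "(int \<Rightarrow> complex) \<Rightarrow> nat \<Rightarrow> (int \<Rightarrow> complex) \<Rightarrow> (int \<Rightarrow> complex) \<Rightarrow> int \<Rightarrow> complex" where
  "wronskian a d x y m = crossing_sum a d x y m - cnj (crossing_sum a d y x m)"

lemma crossing_sum_step:
  "crossing_sum a d x y (m + 1) - crossing_sum a d x y m
     = cnj (x m) * (\<Sum>k = 1..int d. a k * y (m + k)) - (\<Sum>k = 1..int d. cnj (x (m - k)) * a k) * y m"
proof -
  have "crossing_sum a d x y (m + 1) - crossing_sum a d x y m
      = (\<Sum>k = 1..int d. cnj (x m) * a k * y (m + k) - cnj (x (m - k)) * a k * y m)"
    unfolding crossing_sum_def sum_subtractf[symmetric]
    by (intro sum.cong refl) (simp add: sum_int_interval_shift_diff)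
  then show ?thesis
    by (simp add: sum_subtractf sum_distrib_left sum_distrib_right ac_simps)
qed

lemma wronskian_step:
  assumes conj_sym: "\<And>k. k \<in> {- int d..int d} \<Longrightarrow> a (- k) = cnj (a k)"
    and x: "Lop a b d x m = E * x m" and y: "Lop a b d y m = F * y m"
  shows "wronskian a d x y (m + 1) - wronskian a d x y m = (F - cnj E) * cnj (x m) * y m"
proof -
  define A where "A z = (\<Sum>k = 1..int d. a k * z (m + k))" for z
  define B where "B z = (\<Sum>k = 1..int d. a (- k) * z (m - k))" for z
  have "(\<Sum>k = 1..int d. cnj (z (m - k)) * a k) = cnj (B z)" for z
    unfolding B_def cnj_sum by (intro sum.cong refl) (simp add: conj_sym)
  then have step:
    "crossing_sum a d z w (m + 1) - crossing_sum a d z w m = cnj (z m) * A w - cnj (B z) * w m" for z w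
    unfolding A_def by (simp add: crossing_sum_step)
  have "wronskian a d x y (m + 1) - wronskian a d x y m
      = (crossing_sum a d x y (m + 1) - crossing_sum a d x y m)
        - cnj (crossing_sum a d y x (m + 1) - crossing_sum a d y x m)"
    unfolding wronskian_def by simp
  also have "\<dots> = (cnj (x m) * A y - cnj (B x) * y m) - cnj (cnj (y m) * A x - cnj (B y) * x m)"
    unfolding step ..
  also have "\<dots> = cnj (x m) * (A y + B y) - y m * cnj (A x + B x)"
    by (simp add: algebra_simps)
  also have "\<dots> = (F - cnj E) * cnj (x m) * y m"
  proof -
    have Rx: "A x + B x = (E - a 0 - of_real (b m)) * x m"
      and Ry: "A y + B y = (F - a 0 - of_real (b m)) * y m"
      using x y unfolding Lop_split A_def B_def by (simp_all add: sum.distrib algebra_simps)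
    have "cnj (a 0) = a 0"
      using conj_sym[of 0] by simp
    then show ?thesis
      unfolding Rx Ry by (simp add: algebra_simps)
  qed
  finally show ?thesis .
qed

lemma crossing_sum_tendsto_zero:
  assumes "ell2 x" and "ell2 y" and "inj h"
  shows "(\<lambda>N. crossing_sum a d x y (h N)) \<longlonglongrightarrow> 0"
proof -
  have shifted: "(\<lambda>N. z (h N + c)) \<longlonglongrightarrow> 0" if "ell2 z" for z c
    using ell2_tendsto_zero[OF that, of "\<lambda>N. h N + c"] assms(3) by (simp add: inj_def)
  have "crossing_sum a d x y m = (\<Sum>k = 1..int d. \<Sum>j = - k..<0. cnj (x (m + j)) * a k * y (m + j + k))"
    for m
    unfolding crossing_sum_def
    by (intro sum.cong refl sum.reindex_bij_witness[where i = "\<lambda>j. m + j" and j = "\<lambda>p. p - m"]) auto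
  moreover have "(\<lambda>N. \<Sum>k = 1..int d. \<Sum>j = - k..<0. cnj (x (h N + j)) * a k * y (h N + (j + k)))
      \<longlonglongrightarrow> (\<Sum>k = 1..int d. \<Sum>j = - k..<0. cnj 0 * a k * 0)"
    by (intro tendsto_sum tendsto_mult tendsto_cnj tendsto_const shifted assms(1,2))
  ultimately show ?thesis
    by (simp add: add.assoc)
qed

lemma wronskian_tendsto_zero:
  assumes "ell2 x" and "ell2 y" and "inj h"
  shows "(\<lambda>N. wronskian a d x y (h N)) \<longlonglongrightarrow> 0"
  using tendsto_diff[OF crossing_sum_tendsto_zero[OF assms]
      tendsto_cnj[OF crossing_sum_tendsto_zero[OF assms(2,1,3)]]]
  by (simp add: wronskian_def)

lemma blockvec_Cmat_eq_crossing_sum: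
  "conjugate (blockvec x d 0) \<bullet> (Cmat a d *\<^sub>v blockvec y d 1) = crossing_sum a d x y (int d)"
proof -
  have "conjugate (blockvec x d 0) \<bullet> (Cmat a d *\<^sub>v blockvec y d 1)
      = (\<Sum>i<d. \<Sum>j<d. if i \<le> j then
           cnj (x (int d - 1 - int i)) * a (int d - int j + int i) * y (2 * int d - 1 - int j) else 0)"
    by (simp add: scalar_prod_def mult_mat_vec_def blockvec_def Cmat_def sum_distrib_left lessThan_atLeast0)
      (intro sum.cong refl, auto simp: ac_simps)
  also have "\<dots> = (\<Sum>(i, j) \<in> Sigma {..<d} (\<lambda>i. {j \<in> {..<d}. i \<le> j}).
           cnj (x (int d - 1 - int i)) * a (int d - int j + int i) * y (2 * int d - 1 - int j))"
    by (simp add: sum.Sigma[symmetric] flip: sum.inter_filter)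
  also have "\<dots> = (\<Sum>(k, p) \<in> Sigma {1..int d} (\<lambda>k. {int d - k..<int d}). cnj (x p) * a k * y (p + k))"
    by (rule sum.reindex_bij_witness[where i = "\<lambda>(k, p). (nat (int d - 1 - p), nat (2 * int d - 1 - p - k))"
          and j = "\<lambda>(i, j). (int d - int j + int i, int d - 1 - int i)"]) (auto simp: algebra_simps)
  also have "\<dots> = crossing_sum a d x y (int d)"
    by (simp add: crossing_sum_def sum.Sigma)
  finally show ?thesis .
qed

lemma Smat_form_eq_wronskian:
  "conjugate (blockvec u d 1 @\<^sub>v blockvec u d 0) \<bullet> (Smat a d *\<^sub>v (blockvec v d 1 @\<^sub>v blockvec v d 0))
     = wronskian a d u v (int d)"
proof -
  have C: "Cmat a d \<in> carrier_mat d d" and C': "mat_adjoint (Cmat a d) \<in> carrier_mat d d"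
    by (auto simp: Cmat_def mat_adjoint_def mat_of_rows_def)
  have blocks: "blockvec w d n \<in> carrier_vec d" for w n
    by (simp add: blockvec_def)
  have "Smat a d *\<^sub>v (blockvec v d 1 @\<^sub>v blockvec v d 0)
      = (- mat_adjoint (Cmat a d) *\<^sub>v blockvec v d 0) @\<^sub>v (Cmat a d *\<^sub>v blockvec v d 1)"
    unfolding Smat_def using C C' blocks by (subst four_block_mat_mult_vec) auto
  then have "conjugate (blockvec u d 1 @\<^sub>v blockvec u d 0) \<bullet> (Smat a d *\<^sub>v (blockvec v d 1 @\<^sub>v blockvec v d 0))
      = - (conjugate (blockvec u d 1) \<bullet> (mat_adjoint (Cmat a d) *\<^sub>v blockvec v d 0))
        + conjugate (blockvec u d 0) \<bullet> (Cmat a d *\<^sub>v blockvec v d 1)"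
    using C C' blocks by (simp add: conjugate_append_vec scalar_prod_append[of _ d _ d])
  also have "\<dots> = wronskian a d u v (int d)"
    using C blocks by (simp add: scalar_prod_mat_adjoint blockvec_Cmat_eq_crossing_sum wronskian_def)
  finally show ?thesis .
qed

lemma ell2_eigenfunction_eq_0_if_nonreal:
  assumes conj_sym: "\<And>k. k \<in> {- int d..int d} \<Longrightarrow> a (- k) = cnj (a k)"
    and "ell2 u" and eigen: "\<And>n. Lop a b d u n = E * u n" and "E \<noteq> cnj E"
  shows "u m = 0"
proof -
  define S where "S N = (\<Sum>i<2 * N. (cmod (u (- int N + int i)))\<^sup>2)" for N
  have "wronskian a d u u (n + 1) - wronskian a d u u n = (E - cnj E) * of_real ((cmod (u n))\<^sup>2)" for n
    unfolding complex_norm_square using wronskian_step[OF conj_sym eigen eigen, of n] by (simp add: ac_simps)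
  then have "wronskian a d u u (int N) - wronskian a d u u (- int N) = (E - cnj E) * of_real (S N)" for N
    using sum_lessThan_telescope_int[of "wronskian a d u u", of _ "- int N" "2 * N"]
    by (simp add: S_def sum_distrib_left)
  moreover have "(\<lambda>N. wronskian a d u u (int N) - wronskian a d u u (- int N)) \<longlonglongrightarrow> 0 - 0"
    using assms(2) by (intro tendsto_diff wronskian_tendsto_zero) (auto simp: inj_def)
  ultimately have "(\<lambda>N. (E - cnj E) * of_real (S N)) \<longlonglongrightarrow> (E - cnj E) * 0"
    by simp
  then have "(\<lambda>N. complex_of_real (S N)) \<longlonglongrightarrow> 0"
    using assms(4) by simp
  then have "S \<longlonglongrightarrow> 0"
    using tendsto_of_real_iff[of S 0 sequentially, where 'a = complex] by simp
  moreover have "(cmod (u m))\<^sup>2 \<le> S N" if "N \<ge> nat \<bar>m\<bar> + 1" for N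
  proof -
    have i: "nat (m + int N) < 2 * N" "- int N + int (nat (m + int N)) = m"
      using that by linarith+
    have "(cmod (u (- int N + int (nat (m + int N)))))\<^sup>2 \<le> S N"
      unfolding S_def by (rule member_le_sum) (use i(1) in auto)
    with i(2) show ?thesis
      by simp
  qed
  ultimately have "(cmod (u m))\<^sup>2 \<le> 0"
    by (intro LIMSEQ_le_const) auto
  then show ?thesis
    by simp
qed

lemma wronskian_eigenfunctions_eq_0:
  assumes conj_sym: "\<And>k. k \<in> {- int d..int d} \<Longrightarrow> a (- k) = cnj (a k)"
    and "ell2 u" and "ell2 v"
    and eigen_u: "\<And>n. Lop a b d u n = E * u n" and eigen_v: "\<And>n. Lop a b d v n = E * v n"
  shows "wronskian a d u v m = 0"
proof (cases "E = cnj E")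
  case True
  then have "wronskian a d u v (m + int N) = wronskian a d u v m" for N
    using sum_lessThan_telescope_int[of "wronskian a d u v" "\<lambda>_. 0" m N]
      wronskian_step[OF conj_sym eigen_u eigen_v]
    by simp
  moreover have "(\<lambda>N. wronskian a d u v (m + int N)) \<longlonglongrightarrow> 0"
    using assms(2,3) by (intro wronskian_tendsto_zero) (auto simp: inj_def)
  ultimately show ?thesis
    by (simp add: LIMSEQ_const_iff)
next
  case False
  then have "u = (\<lambda>_. 0)"
    using ell2_eigenfunction_eq_0_if_nonreal[OF conj_sym \<open>ell2 u\<close> eigen_u] by blast
  then show ?thesis
    by (simp add: wronskian_def crossing_sum_def)
qed

theorem lemma5p1:
  fixes d :: nat and a :: "int \<Rightarrow> complex" and b :: "int \<Rightarrow> real"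
    and u v :: "int \<Rightarrow> complex" and E :: complex
  assumes "d \<ge> 1"
    and "\<And>k. k \<in> {- int d..int d} \<Longrightarrow> a (- k) = cnj (a k)"
    and "a (int d) \<noteq> 0"
    and "bounded (range b)"
    and "ell2 u" and "ell2 v"
    and "\<And>n. Lop a b d u n = E * u n"
    and "\<And>n. Lop a b d v n = E * v n"
  shows "conjugate (blockvec u d 1 @\<^sub>v blockvec u d 0)
           \<bullet> (Smat a d *\<^sub>v (blockvec v d 1 @\<^sub>v blockvec v d 0)) = 0"
  \<comment> \<open>d \<ge> 1, a d \<noteq> 0 and the boundedness of b make L a bounded self-adjoint operator of
      order d, but the identity itself only needs the eigenvalue equations and square summability.\<close>
  using Smat_form_eq_wronskian wronskian_eigenfunctions_eq_0[OF assms(2,5-8)] by simp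

end
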